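(* Let $\mathcal{G}^*=(\mathbb{V}^*,\mathbb{E}^* )$ be a graph that is either an ADMG or a C-DMG, let $\mathbb{W}^*\subseteq\mathbb{V}^*$, and let $\tilde{\pi}=\langle V_1,\dots,V_n\rangle$ be a walk in $\mathcal{G}^*$. If $\tilde{\pi}$ is $\mathbb{W}^*$-active (not blocked by $\mathbb{W}^*$), then its primary path $\tilde{\pi}_p$ is $\mathbb{W}^*$-active.
   Context: An ADMG is a graph with directed edges $\rightarrow$ and bidirected edges $\leftrightarrow$ whose directed edges form no directed cycle; a C-DMG is a graph with directed and bidirected edges (directed cycles and self-loops allowed) obtained from an ADMG by taking a partition of its vertices into clusters as vertices, with a directed (resp. bidirected) edge between clusters iff some members are so connected. A walk is a sequence of vertices with a specified edge between each consecutive pair. The primary path $\tilde{\pi}_p=\langle U_1,\dots,U_m\rangle$ of a walk $\tilde{\pi}=\langle V_1,\dots,V_n\rangle$ is defined by $U_1=V_1$ and $U_{k+1}=V_{j+1}$ where $j=\max\{i: V_i=U_k\}$, until $U_{k+1}=V_n$; the edge between $U_k$ and $U_{k+1}$ in $\tilde{\pi}_p$ is the edge (with the same type and orientation) between $V_j$ and $V_{j+1}$ in $\tilde{\pi}$. $\mathrm{De}(V)$ denotes the descendants of $V$ in $\mathcal{G}^*$, including $V$. A walk $\langle V_1,\dots,V_n\rangle$ is blocked by $\mathbb{W}^*$ if (1) $V_1\in\mathbb{W}^*$ or $V_n\in\mathbb{W}^*$; or (2) for some $1<i<n$ the walk contains $V_{i-1}\,*\!-\!*\,V_i\rightarrow V_{i+1}$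 or $V_{i-1}\leftarrow V_i\,*\!-\!*\,V_{i+1}$ (any edge type for $*\!-\!*$) with $V_i\in\mathbb{W}^*$; or (3) for some $1<i<n$ it contains $V_{i-1}\,*\!\!\rightarrow V_i\leftarrow\!\!*\,V_{i+1}$ (each edge directed into $V_i$ or bidirected) with $\mathrm{De}(V_i)\cap\mathbb{W}^*=\emptyset$. A walk not blocked is active. *)

theory Defs
  imports Main
begin

(* A graph with directed and bidirected edges. Bidirected edges are stored as
   a symmetric set of ordered pairs. *)
record 'v mgraph =
  verts :: "'v set"
  dedges :: "('v \<times> 'v) set"
  bedges :: "('v \<times> 'v) set"

definition mixed_graph :: "'v mgraph \<Rightarrow> bool" where
  "mixed_graph G \<longleftrightarrow> finite (verts G) \<and> dedges G \<subseteq> verts G \<times> verts G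
     \<and> bedges G \<subseteq> verts G \<times> verts G \<and> sym (bedges G)"

definition is_ADMG :: "'v mgraph \<Rightarrow> bool" where
  "is_ADMG G \<longleftrightarrow> mixed_graph G \<and> acyclic (dedges G)"

(* G is the C-DMG obtained from the ADMG H by the partition of verts H into
   clusters given by the labelling c (cluster of a = c a); the vertices of G are
   the (labels of the) clusters. *)
definition is_CDMG_of :: "'b mgraph \<Rightarrow> ('b \<Rightarrow> 'v) \<Rightarrow> 'v mgraph \<Rightarrow> bool" where
  "is_CDMG_of H c G \<longleftrightarrow> is_ADMG H \<and> verts G = c ` verts H
     \<and> dedges G = {(c a, c b) | a b. (a, b) \<in> dedges H}
     \<and> bedges G = {(c a, c b) | a b. (a, b) \<in> bedges H}"

(* Type of the edge specified between V_i and V_{i+1} in a walk: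
   Fwd: V_i \<rightarrow> V_{i+1};  Bwd: V_i \<leftarrow> V_{i+1};  Bi: V_i \<leftrightarrow> V_{i+1} *)
datatype edge = Fwd | Bwd | Bi

fun edge_ok :: "'v mgraph \<Rightarrow> 'v \<Rightarrow> edge \<Rightarrow> 'v \<Rightarrow> bool" where
  "edge_ok G a Fwd b = ((a, b) \<in> dedges G)"
| "edge_ok G a Bwd b = ((b, a) \<in> dedges G)"
| "edge_ok G a Bi b = ((a, b) \<in> bedges G)"

(* A walk <V_1,...,V_n> is the vertex list vs (0-indexed) together with the list
   es of specified edges, es!i being the edge between vs!i and vs!(i+1). *)
definition is_walk :: "'v mgraph \<Rightarrow> 'v list \<Rightarrow> edge list \<Rightarrow> bool" where
  "is_walk G vs es \<longleftrightarrow> vs \<noteq> [] \<and> length es = length vs - 1 \<and> set vs \<subseteq> verts G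
     \<and> (\<forall>i < length es. edge_ok G (vs ! i) (es ! i) (vs ! Suc i))"

definition De :: "'v mgraph \<Rightarrow> 'v \<Rightarrow> 'v set" where
  "De G v = {w. (v, w) \<in> (dedges G)\<^sup>*}"

definition blocked :: "'v mgraph \<Rightarrow> 'v set \<Rightarrow> 'v list \<Rightarrow> edge list \<Rightarrow> bool" where
  "blocked G W vs es \<longleftrightarrow>
     hd vs \<in> W \<or> last vs \<in> W \<or>
     (\<exists>i. 0 < i \<and> Suc i < length vs \<and>
        (((es ! i = Fwd \<or> es ! (i - 1) = Bwd) \<and> vs ! i \<in> W) \<or>
         ((es ! (i - 1) = Fwd \<or> es ! (i - 1) = Bi) \<and> (es ! i = Bwd \<or> es ! i = Bi)
           \<and> De G (vs ! i) \<inter> W = {})))"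

definition active :: "'v mgraph \<Rightarrow> 'v set \<Rightarrow> 'v list \<Rightarrow> edge list \<Rightarrow> bool" where
  "active G W vs es \<longleftrightarrow> \<not> blocked G W vs es"

definition lastidx :: "'v list \<Rightarrow> 'v \<Rightarrow> nat" where
  "lastidx vs v = Max {i. i < length vs \<and> vs ! i = v}"

lemma lastidx_ge: "i < length vs \<Longrightarrow> i \<le> lastidx vs (vs ! i)"
  unfolding lastidx_def by (rule Max_ge) auto

function prim_from :: "'v list \<Rightarrow> edge list \<Rightarrow> nat \<Rightarrow> 'v list \<times> edge list" where
  "prim_from vs es i =
     (if length vs \<le> i then ([], [])
      else (let j = lastidx vs (vs ! i) in
            if length vs \<le> Suc j then ([vs ! i], [])
            else (case prim_from vs es (Suc j) of (us, fs) \<Rightarrow> (vs ! i # us, es ! j # fs))))"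
  by pat_completeness auto
termination
  by (relation "measure (\<lambda>(vs, es, i). length vs - i)")
     (auto simp: Let_def, metis lastidx_ge diff_less_mono2 le_imp_less_Suc not_le)

definition primary_path :: "'v list \<Rightarrow> edge list \<Rightarrow> 'v list \<times> edge list" where
  "primary_path vs es = prim_from vs es 0"

end

theory Submission
  imports Defs
begin

(* Let U be an interior vertex of the primary path, entered by the walk at position p and
   left at its last occurrence q >= p.  If U blocks the primary path as a non-collider, the
   walk is blocked at q (outgoing edge U -> _) or at p (incoming edge U <- _).  If U is a
   collider of the primary path, follow the walk from p along directed edges: every vertex
   met is a descendant of U, and the first edge that is not directed forward (it exists,
   since the edge at q points into U) yields a collider of the walk none of whose
   descendants lies in W. *)

lemma
  assumes "i < length vs"
  shows lastidx_less_length: "lastidx vs (vs ! i) < length vs"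
    and nth_lastidx: "vs ! lastidx vs (vs ! i) = vs ! i"
proof -
  have "lastidx vs (vs ! i) \<in> {k. k < length vs \<and> vs ! k = vs ! i}"
    unfolding lastidx_def using assms by (intro Max_in) auto
  then show "lastidx vs (vs ! i) < length vs" and "vs ! lastidx vs (vs ! i) = vs ! i"
    by auto
qed

function prim_pos :: "'v list \<Rightarrow> nat \<Rightarrow> nat list" where
  "prim_pos vs i =
     (if length vs \<le> i then []
      else (let j = lastidx vs (vs ! i) in
            if length vs \<le> Suc j then [i] else i # prim_pos vs (Suc j)))"
  by pat_completeness auto
termination
  by (relation "measure (\<lambda>(vs, i). length vs - i)")
     (auto simp: Let_def, metis lastidx_ge diff_less_mono2 le_imp_less_Suc not_le)

declare prim_from.simps [simp del] prim_pos.simps [simp del]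

lemma prim_pos_final:
  "i < length vs \<Longrightarrow> length vs \<le> Suc (lastidx vs (vs ! i)) \<Longrightarrow> prim_pos vs i = [i]"
  by (simp add: prim_pos.simps[of vs i])

lemma prim_pos_step:
  "i < length vs \<Longrightarrow> Suc (lastidx vs (vs ! i)) < length vs \<Longrightarrow>
     prim_pos vs i = i # prim_pos vs (Suc (lastidx vs (vs ! i)))"
  by (simp add: prim_pos.simps[of vs i])

lemma prim_pos_Cons:
  assumes "i < length vs"
  obtains ps where "prim_pos vs i = i # ps"
  using assms prim_pos_final prim_pos_step by (metis not_le)

lemma prim_from_eq_prim_pos:
  "prim_from vs es i =
     (map ((!) vs) (prim_pos vs i), map (\<lambda>p. es ! lastidx vs (vs ! p)) (butlast (prim_pos vs i)))"
proof (induction vs es i rule: prim_from.induct)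
  case (1 vs es i)
  define j where "j = lastidx vs (vs ! i)"
  consider "length vs \<le> i"
    | "i < length vs" "length vs \<le> Suc j"
    | "i < length vs" "Suc j < length vs"
    by linarith
  then show ?case
  proof cases
    case 1
    then show ?thesis by (simp add: prim_from.simps[of vs es i] prim_pos.simps[of vs i])
  next
    case 2
    then show ?thesis by (simp add: prim_from.simps[of vs es i] prim_pos_final j_def)
  next
    case 3
    then obtain ps where "prim_pos vs (Suc j) = Suc j # ps" by (metis prim_pos_Cons)
    with 3 "1.IH"[OF _ j_def] show ?thesis
      by (simp add: prim_from.simps[of vs es i] prim_pos_step j_def Let_def)
  qed
qed

lemma prim_pos_less_length: "p \<in> set (prim_pos vs i) \<Longrightarrow> p < length vs"
proof (induction vs i rule: prim_pos.induct)
  case (1 vs i)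
  then show ?case
    by (cases "i < length vs") (auto simp: prim_pos.simps[of vs i] Let_def split: if_splits)
qed

lemma prim_pos_nth_Suc:
  "Suc k < length (prim_pos vs i) \<Longrightarrow>
     prim_pos vs i ! Suc k = Suc (lastidx vs (vs ! (prim_pos vs i ! k)))"
proof (induction vs i arbitrary: k rule: prim_pos.induct)
  case (1 vs i)
  define j where "j = lastidx vs (vs ! i)"
  have i: "i < length vs"
    using "1.prems" by (cases "i < length vs") (auto simp: prim_pos.simps[of vs i])
  then have j: "Suc j < length vs"
    using "1.prems" prim_pos_final[OF i] by (force simp: j_def)
  then have ps: "prim_pos vs i = i # prim_pos vs (Suc j)"
    using prim_pos_step[OF i] by (simp add: j_def)
  show ?case
  proof (cases k)
    case 0
    obtain ps' where "prim_pos vs (Suc j) = Suc j # ps'" using j by (metis prim_pos_Cons)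
    then show ?thesis using 0 by (simp add: ps j_def)
  next
    case (Suc k')
    then show ?thesis using "1.IH"[OF _ j_def, of k'] "1.prems" i j by (simp add: ps)
  qed
qed

lemma lastidx_last_prim_pos:
  "i < length vs \<Longrightarrow> lastidx vs (vs ! last (prim_pos vs i)) = length vs - 1"
proof (induction vs i rule: prim_pos.induct)
  case (1 vs i)
  define j where "j = lastidx vs (vs ! i)"
  have "j < length vs" using "1.prems" lastidx_less_length j_def by blast
  show ?case
  proof (cases "Suc j < length vs")
    case True
    obtain ps' where ps': "prim_pos vs (Suc j) = Suc j # ps'" using True by (metis prim_pos_Cons)
    have "prim_pos vs i = i # prim_pos vs (Suc j)"
      using prim_pos_step "1.prems" True by (simp add: j_def)
    then have "last (prim_pos vs i) = last (prim_pos vs (Suc j))" by (simp add: ps')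
    moreover have "lastidx vs (vs ! last (prim_pos vs (Suc j))) = length vs - 1"
      using "1.IH"[OF _ j_def] "1.prems" True by simp
    ultimately show ?thesis by simp
  next
    case False
    then show ?thesis
      using \<open>j < length vs\<close> "1.prems" by (simp add: prim_pos_final j_def)
  qed
qed

lemma hd_primary_path: "vs \<noteq> [] \<Longrightarrow> hd (fst (primary_path vs es)) = hd vs"
proof -
  assume "vs \<noteq> []"
  then obtain ps where "prim_pos vs 0 = 0 # ps" by (metis prim_pos_Cons length_greater_0_conv)
  then show ?thesis by (simp add: primary_path_def prim_from_eq_prim_pos hd_conv_nth \<open>vs \<noteq> []\<close>)
qed

lemma last_primary_path: "vs \<noteq> [] \<Longrightarrow> last (fst (primary_path vs es)) = last vs"
proof -
  assume "vs \<noteq> []"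
  then have ne: "prim_pos vs 0 \<noteq> []" by (metis prim_pos_Cons length_greater_0_conv list.discI)
  then have "last (prim_pos vs 0) < length vs" by (metis last_in_set prim_pos_less_length)
  then have "vs ! last (prim_pos vs 0) = last vs"
    using lastidx_last_prim_pos[of 0 vs] nth_lastidx \<open>vs \<noteq> []\<close>
    by (metis last_conv_nth length_greater_0_conv)
  then show ?thesis by (simp add: primary_path_def prim_from_eq_prim_pos last_map ne)
qed

lemma primary_path_interior:
  assumes "0 < i" and "Suc i < length (fst (primary_path vs es))"
  obtains p q where "0 < p" "p \<le> q" "Suc q < length vs" "vs ! q = vs ! p"
    "fst (primary_path vs es) ! i = vs ! p"
    "snd (primary_path vs es) ! (i - 1) = es ! (p - 1)"
    "snd (primary_path vs es) ! i = es ! q"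
proof
  define ps where "ps = prim_pos vs 0"
  define p where "p = ps ! i"
  define q where "q = lastidx vs (vs ! p)"
  have pp: "primary_path vs es =
      (map ((!) vs) ps, map (\<lambda>p. es ! lastidx vs (vs ! p)) (butlast ps))"
    by (simp add: primary_path_def prim_from_eq_prim_pos ps_def)
  have i: "Suc i < length ps" using assms(2) by (simp add: pp)
  have p_Suc: "p = Suc (lastidx vs (vs ! (ps ! (i - 1))))"
    using prim_pos_nth_Suc[of "i - 1" vs 0] i assms(1) by (simp add: p_def ps_def)
  have p: "p < length vs"
    using i prim_pos_less_length[of p vs 0] nth_mem[of i ps] by (simp add: p_def ps_def)
  show "0 < p" by (simp add: p_Suc)
  show "p \<le> q" using lastidx_ge[OF p] by (simp add: q_def)
  show "vs ! q = vs ! p" using nth_lastidx[OF p] by (simp add: q_def)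
  have "ps ! Suc i < length vs"
    using i prim_pos_less_length[of "ps ! Suc i" vs 0] nth_mem[of "Suc i" ps] by (simp add: ps_def)
  then show "Suc q < length vs"
    using prim_pos_nth_Suc[of i vs 0] i by (simp add: q_def p_def ps_def)
  show "fst (primary_path vs es) ! i = vs ! p"
    using i by (simp add: pp p_def)
  have edge: "snd (primary_path vs es) ! k = es ! lastidx vs (vs ! (ps ! k))"
    if "Suc k < length ps" for k
  proof -
    have "k < length (butlast ps)" using that by simp
    then show ?thesis by (simp add: pp nth_butlast)
  qed
  show "snd (primary_path vs es) ! (i - 1) = es ! (p - 1)"
    using edge[of "i - 1"] i by (simp add: p_Suc)
  show "snd (primary_path vs es) ! i = es ! q"
    using edge[of i] i by (simp add: q_def p_def)
qed

definition blocks :: "'v mgraph \<Rightarrow> 'v set \<Rightarrow> edge \<Rightarrow> 'v \<Rightarrow> edge \<Rightarrow> bool" where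
  "blocks G W e\<^sub>1 v e\<^sub>2 \<longleftrightarrow>
     ((e\<^sub>2 = Fwd \<or> e\<^sub>1 = Bwd) \<and> v \<in> W) \<or>
     ((e\<^sub>1 = Fwd \<or> e\<^sub>1 = Bi) \<and> (e\<^sub>2 = Bwd \<or> e\<^sub>2 = Bi) \<and> De G v \<inter> W = {})"

lemma blocked_iff_blocks:
  "blocked G W vs es \<longleftrightarrow> hd vs \<in> W \<or> last vs \<in> W \<or>
     (\<exists>i. 0 < i \<and> Suc i < length vs \<and> blocks G W (es ! (i - 1)) (vs ! i) (es ! i))"
  unfolding blocked_def blocks_def by blast

lemma De_subset: "w \<in> De G v \<Longrightarrow> De G w \<subseteq> De G v"
  unfolding De_def by (auto intro: rtrancl_trans)

lemma forward_run_in_De: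
  assumes walk: "is_walk G vs es" and "a \<le> k" "k < length vs"
    and fwd: "\<And>m. a \<le> m \<Longrightarrow> m < k \<Longrightarrow> es ! m = Fwd"
  shows "vs ! k \<in> De G (vs ! a)"
  using \<open>a \<le> k\<close> \<open>k < length vs\<close>
proof (induction k rule: dec_induct)
  case base
  show ?case by (simp add: De_def)
next
  case (step m)
  have "m < length es" using walk step.prems by (simp add: is_walk_def)
  then have "(vs ! m, vs ! Suc m) \<in> dedges G"
    using walk fwd[OF step.hyps(1,2)] by (force simp: is_walk_def)
  with step show ?case by (simp add: De_def rtrancl_into_rtrancl)
qed

lemma collider_run_blocked:
  assumes walk: "is_walk G vs es" and "0 < a" "a \<le> b" "Suc b < length vs"
    and into_a: "es ! (a - 1) = Fwd \<or> es ! (a - 1) = Bi"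
    and into_b: "es ! b = Bwd \<or> es ! b = Bi"
    and De_a: "De G (vs ! a) \<inter> W = {}"
  shows "blocked G W vs es"
proof -
  define k where "k = (LEAST k. a \<le> k \<and> es ! k \<noteq> Fwd)"
  have b: "a \<le> b \<and> es ! b \<noteq> Fwd" using \<open>a \<le> b\<close> into_b by auto
  then have "a \<le> k \<and> es ! k \<noteq> Fwd" unfolding k_def by (rule LeastI)
  then have k: "a \<le> k" "es ! k \<noteq> Fwd" by simp_all
  from b have "k \<le> b" unfolding k_def by (rule Least_le)
  have fwd: "es ! m = Fwd" if "a \<le> m" "m < k" for m
    using not_less_Least[of m "\<lambda>k. a \<le> k \<and> es ! k \<noteq> Fwd"] that by (simp add: k_def)
  have k_De: "vs ! k \<in> De G (vs ! a)"
    using \<open>k \<le> b\<close> \<open>Suc b < length vs\<close>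
    by (intro forward_run_in_De[OF walk k(1) _ fwd]) simp_all
  have "De G (vs ! k) \<inter> W = {}" using De_subset[OF k_De] De_a by blast
  moreover have "es ! (k - 1) = Fwd \<or> es ! (k - 1) = Bi"
  proof (cases "k = a")
    case False
    then show ?thesis using fwd[of "k - 1"] k \<open>0 < a\<close> by simp
  qed (use into_a in simp)
  moreover have "es ! k = Bwd \<or> es ! k = Bi" using k(2) by (cases "es ! k") auto
  ultimately have "blocks G W (es ! (k - 1)) (vs ! k) (es ! k)" by (simp add: blocks_def)
  then show ?thesis
    unfolding blocked_iff_blocks using k \<open>k \<le> b\<close> \<open>0 < a\<close> \<open>Suc b < length vs\<close>
    by (intro disjI2 exI[of _ k]) auto
qed

lemma blocks_across_loop_blocked:
  assumes walk: "is_walk G vs es" and "0 < p" "p \<le> q" "Suc q < length vs" "vs ! q = vs ! p"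
    and "blocks G W (es ! (p - 1)) (vs ! p) (es ! q)"
  shows "blocked G W vs es"
  using assms(6) unfolding blocks_def
proof (elim disjE conjE)
  assume "es ! q = Fwd" "vs ! p \<in> W"
  then have "blocks G W (es ! (q - 1)) (vs ! q) (es ! q)" by (simp add: blocks_def assms(5))
  then show ?thesis
    unfolding blocked_iff_blocks using assms(2-4) by (intro disjI2 exI[of _ q]) auto
next
  assume "es ! (p - 1) = Bwd" "vs ! p \<in> W"
  then have "blocks G W (es ! (p - 1)) (vs ! p) (es ! p)" by (simp add: blocks_def)
  then show ?thesis
    unfolding blocked_iff_blocks using assms(2-4) by (intro disjI2 exI[of _ p]) auto
qed (use collider_run_blocked[OF walk assms(2-4)] in auto)

lemma blocked_primary_path_imp_blocked:
  assumes walk: "is_walk G vs es"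
    and "blocked G W (fst (primary_path vs es)) (snd (primary_path vs es))"
  shows "blocked G W vs es"
proof -
  have "vs \<noteq> []" using walk by (simp add: is_walk_def)
  from assms(2) consider "hd vs \<in> W" | "last vs \<in> W"
    | i where "0 < i" "Suc i < length (fst (primary_path vs es))"
        "blocks G W (snd (primary_path vs es) ! (i - 1)) (fst (primary_path vs es) ! i)
           (snd (primary_path vs es) ! i)"
    unfolding blocked_iff_blocks hd_primary_path[OF \<open>vs \<noteq> []\<close>]
      last_primary_path[OF \<open>vs \<noteq> []\<close>] by (elim disjE exE conjE) auto
  then show ?thesis
  proof cases
    case (3 i)
    obtain p q where "0 < p" "p \<le> q" "Suc q < length vs" "vs ! q = vs ! p"
      "fst (primary_path vs es) ! i = vs ! p"
      "snd (primary_path vs es) ! (i - 1) = es ! (p - 1)"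
      "snd (primary_path vs es) ! i = es ! q"
      using primary_path_interior[OF 3(1,2)] .
    with 3(3) show ?thesis using blocks_across_loop_blocked[OF walk] by simp
  qed (simp_all add: blocked_iff_blocks)
qed

theorem mainTheorem6:
  fixes G :: "'v mgraph" and H :: "'b mgraph" and c :: "'b \<Rightarrow> 'v"
    and W :: "'v set" and vs :: "'v list" and es :: "edge list"
  assumes "is_ADMG G \<or> is_CDMG_of H c G"
    and "W \<subseteq> verts G"
    and "is_walk G vs es"
    and "active G W vs es"
  shows "active G W (fst (primary_path vs es)) (snd (primary_path vs es))"
  using assms(4) blocked_primary_path_imp_blocked[OF assms(3)] by (auto simp: active_def)

end
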